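(* Assume (A1) and (A2). Fix integers $1\le s\le e\le T$ and set $n=e-s+1$. Then for every $x>0$, \[ \Pr\bigl(|\widehat C(s,e)-C(s,e)|>x\bigr)\le 4\exp\Bigl(-\frac{x^2}{8(8m+5)M^2\,n}\Bigr). \]
   Context: Let $Y_1,\dots,Y_T$ be random vectors in $\mathbb R^d$ and fix true change points $0=\tau_0<\tau_1<\dots<\tau_K<\tau_{K+1}=T$. Let $k:\mathbb R^d\times\mathbb R^d\to\mathbb R$ be a positive definite kernel with RKHS $\mathcal H$. For $1\le s\le e\le T$ define the empirical segment cost $\widehat C(s,e)=\sum_{t=s}^e k(Y_t,Y_t)-\frac{1}{e-s+1}\sum_{i=s}^e\sum_{j=s}^e k(Y_i,Y_j)$ and its expectation $C(s,e)=\mathbb E[\widehat C(s,e)]$. (A1) For a fixed integer $m\ge 0$, the sequence is $m$-dependent: for every $t$, $(Y_1,\dots,Y_t)$ is independent of $(Y_{t+m+1},\dots,Y_T)$; moreover for each $k=1,\dots,K+1$ the subsequence $(Y_t)_{\tau_{k-1}<t\le\tau_k}$ is strictly stationary with marginal distribution $P_k$. (A2) The kernel is bounded and characteristic: $0\le k(x,y)\le M<\infty$ for all $x,y$. *)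

theory Defs
  imports "HOL-Probability.Probability"
begin

definition Chat :: "('a \<Rightarrow> 'a \<Rightarrow> real) \<Rightarrow> (nat \<Rightarrow> 'w \<Rightarrow> 'a) \<Rightarrow> nat \<Rightarrow> nat \<Rightarrow> 'w \<Rightarrow> real" where
  "Chat k Y s e \<omega> =
     (\<Sum>t=s..e. k (Y t \<omega>) (Y t \<omega>))
     - (1 / real (e - s + 1)) * (\<Sum>i=s..e. \<Sum>j=s..e. k (Y i \<omega>) (Y j \<omega>))"

definition pos_def_kernel :: "('a \<Rightarrow> 'a \<Rightarrow> real) \<Rightarrow> bool" where
  "pos_def_kernel k \<longleftrightarrow> (\<forall>x y. k x y = k y x) \<and>
     (\<forall>n (x :: nat \<Rightarrow> 'a) (c :: nat \<Rightarrow> real).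
        (\<Sum>i<n. \<Sum>j<n. c i * c j * k (x i) (x j)) \<ge> 0)"

text \<open>Characteristic kernel: the kernel mean embedding is injective on Borel probability
  measures, i.e. the squared MMD
  \<open>\<parallel>\<mu>_P - \<mu>_Q\<parallel>\<^sup>2 = \<integral>\<integral>k dP dP + \<integral>\<integral>k dQ dQ - 2 \<integral>\<integral>k dP dQ\<close> vanishes only if P = Q.\<close>
definition characteristic_kernel :: "('a::topological_space \<Rightarrow> 'a \<Rightarrow> real) \<Rightarrow> bool" where
  "characteristic_kernel k \<longleftrightarrow>
     (\<forall>P Q. prob_space P \<longrightarrow> prob_space Q \<longrightarrow> sets P = sets borel \<longrightarrow> sets Q = sets borel \<longrightarrow>
        (\<integral>x. (\<integral>y. k x y \<partial>P) \<partial>P) + (\<integral>x. (\<integral>y. k x y \<partial>Q) \<partial>Q)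
          - 2 * (\<integral>x. (\<integral>y. k x y \<partial>Q) \<partial>P) = 0 \<longrightarrow> P = Q)"

end

(* Cut the segment {s..e} into consecutive blocks of length m + 1 and condition on the first a
   blocks; this gives a Doob martingale ending in Chat. Dropping from the cost the window formed
   by block a and the m indices after it changes the cost by at most a multiple of Mk times the
   window length, and by m-dependence what remains has the same conditional expectation given
   a or a - 1 blocks. Hence each martingale increment has the form U - E[U | past] for a U in an
   interval of that length, so the conditional Hoeffding lemma and the Azuma-Hoeffding argument
   bound the moment generating function; windows have length at most 2m + 1 and total length at
   most 2n, and a Chernoff bound gives the tail. *)

theory Submission
  imports Defs
begin

section \<open>Hoeffding's lemma\<close>

lemma exp_le_chord:
  fixes l a b u :: real
  assumes "a < b" "a \<le> u" "u \<le> b"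
  shows "exp (l * u) \<le> ((b - u) * exp (l * a) + (u - a) * exp (l * b)) / (b - a)"
proof -
  define y where "y = (b - u) / (b - a)"
  have y: "0 \<le> y" "y \<le> 1" using assms by (auto simp: y_def field_simps)
  have "exp ((1 - y) * (l * b) + y * (l * a)) \<le> (1 - y) * exp (l * b) + y * exp (l * a)"
    using convex_onD[OF convex_on_exp[of 1], of y "l * b" "l * a"] y by (simp add: algebra_simps)
  moreover have "(1 - y) * (l * b) + y * (l * a) = l * (b - y * (b - a))"
    by (simp add: algebra_simps)
  moreover have "y * (b - a) = b - u"
    using assms by (simp add: y_def)
  moreover have "1 - y = (u - a) / (b - a)"
    using assms by (simp add: y_def field_simps)
  then have "(1 - y) * exp (l * b) + y * exp (l * a)
      = ((b - u) * exp (l * a) + (u - a) * exp (l * b)) / (b - a)"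
    by (simp add: y_def add_divide_distrib)
  ultimately show ?thesis by simp
qed

lemma Hoeffding_chord_bound_nonneg:
  fixes l a b \<mu> :: real
  assumes "0 \<le> l" "a < b" "a \<le> \<mu>" "\<mu> \<le> b"
  shows "exp (- l * \<mu>) * (((b - \<mu>) * exp (l * a) + (\<mu> - a) * exp (l * b)) / (b - a))
           \<le> exp (l\<^sup>2 * (b - a)\<^sup>2 / 8)"
proof -
  define p where "p = (\<mu> - a) / (b - a)"
  define h where "h = l * (b - a)"
  have "0 \<le> p" "0 \<le> h"
    using assms by (simp_all add: p_def h_def)
  have \<mu>a: "\<mu> - a = p * (b - a)"
    using assms by (simp add: p_def)
  then have b\<mu>: "b - \<mu> = (1 - p) * (b - a)"
    by (simp add: algebra_simps)
  have eb: "exp (l * b) = exp (l * a) * exp h"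
    by (simp add: h_def algebra_simps flip: exp_add)
  have "((b - \<mu>) * exp (l * a) + (\<mu> - a) * exp (l * b)) / (b - a)
      = ((b - a) * (exp (l * a) * (1 + p * (exp h - 1)))) / (b - a)"
    unfolding \<mu>a b\<mu> eb by (simp add: algebra_simps)
  also have "\<dots> = exp (l * a) * (1 + p * (exp h - 1))"
    using assms by simp
  finally have chord: "((b - \<mu>) * exp (l * a) + (\<mu> - a) * exp (l * b)) / (b - a)
      = exp (l * a) * (1 + p * (exp h - 1))" .
  have "- l * \<mu> + l * a = - l * (\<mu> - a)"
    by (simp add: algebra_simps)
  then have "exp (- l * \<mu>) * exp (l * a) = exp (- h * p)"
    unfolding \<mu>a h_def by (simp add: algebra_simps flip: exp_add)
  with chord have "exp (- l * \<mu>) * (((b - \<mu>) * exp (l * a) + (\<mu> - a) * exp (l * b)) / (b - a))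
      = exp (- h * p) * (1 + p * (exp h - 1))"
    by (metis mult.assoc)
  also have "\<dots> = exp (- h * p + ln (1 + p * (exp h - 1)))"
  proof -
    have "0 < 1 + p * (exp h - 1)"
      using \<open>0 \<le> p\<close> \<open>0 \<le> h\<close> by (simp add: add_pos_nonneg)
    then show ?thesis
      by (simp only: exp_add exp_ln)
  qed
  also have "\<dots> \<le> exp (h\<^sup>2 / 8)"
    using Hoeffdings_lemma_aux[OF \<open>0 \<le> h\<close> \<open>0 \<le> p\<close>] by simp
  finally show ?thesis
    by (simp add: h_def power_mult_distrib)
qed

lemma Hoeffding_chord_bound:
  fixes l a b \<mu> :: real
  assumes "a < b" "a \<le> \<mu>" "\<mu> \<le> b"
  shows "exp (- l * \<mu>) * (((b - \<mu>) * exp (l * a) + (\<mu> - a) * exp (l * b)) / (b - a))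
           \<le> exp (l\<^sup>2 * (b - a)\<^sup>2 / 8)"
proof (cases "0 \<le> l")
  case True
  then show ?thesis
    using Hoeffding_chord_bound_nonneg assms by blast
next
  case False
  \<comment> \<open>reflecting \<open>a, b, \<mu>, l\<close> to \<open>-b, -a, -\<mu>, -l\<close> leaves both sides unchanged\<close>
  from False assms have "exp (- (- l) * (- \<mu>)) * (((- a - - \<mu>) * exp (- l * - b)
      + (- \<mu> - - b) * exp (- l * - a)) / (- a - - b)) \<le> exp ((- l)\<^sup>2 * (- a - - b)\<^sup>2 / 8)"
    by (intro Hoeffding_chord_bound_nonneg) auto
  then show ?thesis
    by (simp add: algebra_simps)
qed

lemma exp_mult_le_of_abs_le:
  fixes l u c :: real
  assumes "\<bar>u\<bar> \<le> c"
  shows "exp (l * u) \<le> exp (\<bar>l\<bar> * c)"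
proof -
  have "l * u \<le> \<bar>l\<bar> * \<bar>u\<bar>"
    by (metis abs_ge_self abs_mult)
  also have "\<dots> \<le> \<bar>l\<bar> * c"
    using assms by (simp add: mult_left_mono)
  finally show ?thesis
    by simp
qed

lemma (in finite_measure) integrable_AE_bounded:
  fixes f :: "'a \<Rightarrow> real"
  assumes "f \<in> borel_measurable M" "AE x in M. \<bar>f x\<bar> \<le> B"
  shows "integrable M f"
  using assms by (intro integrable_const_bound[where B = B]) auto

lemma (in finite_measure) integrable_mult_AE_bounded:
  fixes f g :: "'a \<Rightarrow> real"
  assumes "f \<in> borel_measurable M" "g \<in> borel_measurable M"
    and "AE x in M. \<bar>f x\<bar> \<le> A" "AE x in M. \<bar>g x\<bar> \<le> B"
  shows "integrable M (\<lambda>x. f x * g x)"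
proof (rule integrable_AE_bounded)
  show "AE x in M. \<bar>f x * g x\<bar> \<le> A * B"
    using assms(3,4) by eventually_elim (auto simp: abs_mult intro: mult_mono)
qed (use assms in measurable)

section \<open>Conditional Hoeffding lemma and the Azuma-Hoeffding bound\<close>

lemma (in prob_space) real_cond_exp_bounds:
  fixes f :: "'a \<Rightarrow> real"
  assumes "subalgebra M F" and [measurable]: "f \<in> borel_measurable M"
    and bounds: "AE x in M. a \<le> f x \<and> f x \<le> b"
  shows "AE x in M. a \<le> real_cond_exp M F f x \<and> real_cond_exp M F f x \<le> b"
proof -
  interpret F: finite_measure_subalgebra M F
    using assms(1) by unfold_locales
  have "integrable M f"
    using bounds by (intro integrable_AE_bounded[where B = "\<bar>a\<bar> + \<bar>b\<bar>"]) auto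
  then show ?thesis
    using F.real_cond_exp_ge_c[of f a] F.real_cond_exp_le_c[of f b] bounds by auto
qed

lemma (in prob_space) real_cond_exp_affine:
  fixes U :: "'a \<Rightarrow> real"
  assumes "subalgebra M F" and U: "integrable M U"
  shows "AE x in M. real_cond_exp M F (\<lambda>x. \<alpha> + \<beta> * U x) x = \<alpha> + \<beta> * real_cond_exp M F U x"
proof -
  interpret F: finite_measure_subalgebra M F
    using assms(1) by unfold_locales
  have "AE x in M. real_cond_exp M F (\<lambda>x. \<alpha> + \<beta> * U x) x
      = real_cond_exp M F (\<lambda>_. \<alpha>) x + real_cond_exp M F (\<lambda>x. \<beta> * U x) x"
    using U by (intro F.real_cond_exp_add) auto
  moreover have "AE x in M. real_cond_exp M F (\<lambda>_. \<alpha>) x = \<alpha>"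
    by (intro F.real_cond_exp_F_meas) auto
  moreover have "AE x in M. real_cond_exp M F (\<lambda>x. \<beta> * U x) x = \<beta> * real_cond_exp M F U x"
    using U by (rule F.real_cond_exp_cmult)
  ultimately show ?thesis
    by eventually_elim simp
qed

lemma (in prob_space) real_cond_exp_exp_le_chord:
  fixes U :: "'a \<Rightarrow> real"
  assumes F: "subalgebra M F" and [measurable]: "U \<in> borel_measurable M"
    and "a < b" and bounds: "AE x in M. a \<le> U x \<and> U x \<le> b"
  shows "AE x in M. real_cond_exp M F (\<lambda>x. exp (l * U x)) x
           \<le> ((b - real_cond_exp M F U x) * exp (l * a) + (real_cond_exp M F U x - a) * exp (l * b)) / (b - a)"
proof -
  interpret F: finite_measure_subalgebra M F
    using F by unfold_locales
  define \<alpha> where "\<alpha> = (b * exp (l * a) - a * exp (l * b)) / (b - a)"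
  define \<beta> where "\<beta> = (exp (l * b) - exp (l * a)) / (b - a)"
  have chord: "((b - u) * exp (l * a) + (u - a) * exp (l * b)) / (b - a) = \<alpha> + \<beta> * u" for u
  proof -
    have "\<alpha> + \<beta> * u = (b * exp (l * a) - a * exp (l * b) + (exp (l * b) - exp (l * a)) * u) / (b - a)"
      by (simp add: \<alpha>_def \<beta>_def add_divide_distrib)
    then show ?thesis
      by (simp add: algebra_simps)
  qed
  have U_abs: "AE x in M. \<bar>U x\<bar> \<le> \<bar>a\<bar> + \<bar>b\<bar>"
    using bounds by eventually_elim linarith
  then have "integrable M U"
    by (auto intro: integrable_AE_bounded)
  then have "integrable M (\<lambda>x. \<alpha> + \<beta> * U x)"
    by (intro Bochner_Integration.integrable_add integrable_const integrable_mult_right)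
  moreover have "integrable M (\<lambda>x. exp (l * U x))"
    using U_abs by (intro integrable_AE_bounded) (auto elim!: AE_mp intro!: exp_mult_le_of_abs_le)
  moreover have "AE x in M. exp (l * U x) \<le> \<alpha> + \<beta> * U x"
    using bounds by eventually_elim (simp add: exp_le_chord[OF \<open>a < b\<close>] flip: chord)
  ultimately have "AE x in M. real_cond_exp M F (\<lambda>x. exp (l * U x)) x \<le> real_cond_exp M F (\<lambda>x. \<alpha> + \<beta> * U x) x"
    by (intro F.real_cond_exp_mono) auto
  with real_cond_exp_affine[OF F \<open>integrable M U\<close>, of \<alpha> \<beta>] show ?thesis
    by eventually_elim (simp add: chord)
qed

lemma (in prob_space) conditional_Hoeffding:
  fixes U :: "'a \<Rightarrow> real"
  assumes F: "subalgebra M F" and U [measurable]: "U \<in> borel_measurable M"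
    and bounds: "AE x in M. a \<le> U x \<and> U x \<le> b"
  shows "AE x in M. real_cond_exp M F (\<lambda>x. exp (l * (U x - real_cond_exp M F U x))) x
           \<le> exp (l\<^sup>2 * (b - a)\<^sup>2 / 8)"
proof -
  interpret F: finite_measure_subalgebra M F
    using F by unfold_locales
  define \<mu> where "\<mu> = real_cond_exp M F U"
  have [measurable]: "\<mu> \<in> borel_measurable F" "\<mu> \<in> borel_measurable M"
    by (simp_all add: \<mu>_def)
  have \<mu>_bounds: "AE x in M. a \<le> \<mu> x \<and> \<mu> x \<le> b"
    unfolding \<mu>_def by (rule real_cond_exp_bounds[OF F _ bounds]) simp
  have "AE x in M. a \<le> b"
    using bounds by eventually_elim simp
  then consider "a = b" | "a < b"
    by fastforce
  then show ?thesis
  proof cases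
    case 1
    have "AE x in M. exp (l * (U x - \<mu> x)) = 1"
      using bounds \<mu>_bounds by eventually_elim (simp add: 1)
    then have "AE x in M. real_cond_exp M F (\<lambda>x. exp (l * (U x - \<mu> x))) x = real_cond_exp M F (\<lambda>_. 1) x"
      by (intro F.real_cond_exp_cong) auto
    moreover have "AE x in M. real_cond_exp M F (\<lambda>_. 1) x = 1"
      by (intro F.real_cond_exp_F_meas) auto
    ultimately show ?thesis
      by eventually_elim (simp add: \<mu>_def 1)
  next
    case 2
    have exp_bound: "\<bar>exp (l' * u)\<bar> \<le> exp (\<bar>l\<bar> * (\<bar>a\<bar> + \<bar>b\<bar>))"
      if "a \<le> u \<and> u \<le> b" "\<bar>l'\<bar> = \<bar>l\<bar>" for u l'
    proof -
      have "\<bar>u\<bar> \<le> \<bar>a\<bar> + \<bar>b\<bar>"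
        using that by linarith
      from exp_mult_le_of_abs_le[OF this, of l'] show ?thesis
        using that by simp
    qed
    have "AE x in M. \<bar>exp (- l * \<mu> x)\<bar> \<le> exp (\<bar>l\<bar> * (\<bar>a\<bar> + \<bar>b\<bar>))"
      using \<mu>_bounds by eventually_elim (rule exp_bound; simp)
    moreover have "AE x in M. \<bar>exp (l * U x)\<bar> \<le> exp (\<bar>l\<bar> * (\<bar>a\<bar> + \<bar>b\<bar>))"
      using bounds by eventually_elim (rule exp_bound; simp)
    ultimately have "AE x in M. real_cond_exp M F (\<lambda>x. exp (- l * \<mu> x) * exp (l * U x)) x
        = exp (- l * \<mu> x) * real_cond_exp M F (\<lambda>x. exp (l * U x)) x"
      by (intro F.real_cond_exp_mult integrable_mult_AE_bounded) auto
    moreover have "(\<lambda>x. exp (- l * \<mu> x) * exp (l * U x)) = (\<lambda>x. exp (l * (U x - \<mu> x)))"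
      by (simp add: fun_eq_iff algebra_simps flip: exp_add)
    ultimately have "AE x in M. real_cond_exp M F (\<lambda>x. exp (l * (U x - \<mu> x))) x
        = exp (- l * \<mu> x) * real_cond_exp M F (\<lambda>x. exp (l * U x)) x"
      by simp
    then show ?thesis
      using real_cond_exp_exp_le_chord[OF F U 2 bounds, of l] \<mu>_bounds
    proof eventually_elim
      case (elim x)
      have "real_cond_exp M F (\<lambda>x. exp (l * (U x - \<mu> x))) x
          = exp (- l * \<mu> x) * real_cond_exp M F (\<lambda>x. exp (l * U x)) x"
        by (fact elim(1))
      also have "\<dots> \<le> exp (- l * \<mu> x) * (((b - \<mu> x) * exp (l * a) + (\<mu> x - a) * exp (l * b)) / (b - a))"
        using elim(2) unfolding \<mu>_def by (rule mult_left_mono) simp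
      also have "\<dots> \<le> exp (l\<^sup>2 * (b - a)\<^sup>2 / 8)"
        using Hoeffding_chord_bound[OF 2, of "\<mu> x" l] elim(3) by simp
      finally show ?case
        by (simp add: \<mu>_def)
    qed
  qed
qed

lemma (in prob_space) real_cond_exp_trivial_subalgebra:
  assumes F: "subalgebra M F" and trivial: "\<And>A. A \<in> sets F \<Longrightarrow> A = {} \<or> A = space M"
    and "integrable M f" and x: "x \<in> space M"
  shows "real_cond_exp M F f x = expectation f"
proof -
  interpret F: finite_measure_subalgebra M F
    using F by unfold_locales
  define c where "c = real_cond_exp M F f x"
  have "{y \<in> space F. real_cond_exp M F f y = c} \<in> sets F"
    by measurable
  moreover have "space F = space M"
    using F by (simp add: subalgebra_def)
  ultimately have "{y \<in> space M. real_cond_exp M F f y = c} \<in> sets F"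
    by simp
  then have const: "real_cond_exp M F f y = c" if "y \<in> space M" for y
    using trivial that x by (fastforce simp: c_def)
  have "expectation f = (\<integral>y. real_cond_exp M F f y \<partial>M)"
    using F.real_cond_exp_int(2)[OF \<open>integrable M f\<close>] by simp
  also have "\<dots> = c"
    using const prob_space by (simp cong: Bochner_Integration.integral_cong)
  finally show ?thesis
    by (simp add: c_def)
qed

lemma (in prob_space) real_cond_exp_deviation_bound:
  fixes f :: "'a \<Rightarrow> real"
  assumes "subalgebra M F" and [measurable]: "f \<in> borel_measurable M"
    and bound: "AE x in M. \<bar>f x\<bar> \<le> B"
  shows "AE x in M. \<bar>real_cond_exp M F f x - expectation f\<bar> \<le> 2 * B"
proof -
  have "integrable M f"
    using bound by (intro integrable_AE_bounded) auto
  then have "- B \<le> expectation f" "expectation f \<le> B"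
    using bound by (auto intro!: integral_ge_const integral_le_const elim: AE_mp)
  moreover have "AE x in M. - B \<le> real_cond_exp M F f x \<and> real_cond_exp M F f x \<le> B"
    using bound by (intro real_cond_exp_bounds[OF assms(1)]) auto
  ultimately show ?thesis
    by (auto elim: AE_mp)
qed

lemma (in prob_space) integral_mult_exp_centered_le:
  fixes W U :: "'a \<Rightarrow> real"
  assumes F: "subalgebra M F" and W [measurable]: "W \<in> borel_measurable F"
    and W_bounds: "AE x in M. 0 \<le> W x \<and> W x \<le> C"
    and U [measurable]: "U \<in> borel_measurable M" and bounds: "AE x in M. a \<le> U x \<and> U x \<le> b"
  shows "(\<integral>x. W x * exp (l * (U x - real_cond_exp M F U x)) \<partial>M)
           \<le> (\<integral>x. W x \<partial>M) * exp (l\<^sup>2 * (b - a)\<^sup>2 / 8)"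
proof -
  interpret F: finite_measure_subalgebra M F
    using F by unfold_locales
  define h where "h = (\<lambda>x. exp (l * (U x - real_cond_exp M F U x)))"
  define c where "c = exp (l\<^sup>2 * (b - a)\<^sup>2 / 8)"
  have [measurable]: "W \<in> borel_measurable M" "h \<in> borel_measurable M"
    using measurable_from_subalg[OF F W] by (simp_all add: h_def)
  have "AE x in M. a \<le> real_cond_exp M F U x \<and> real_cond_exp M F U x \<le> b"
    by (rule real_cond_exp_bounds[OF F U bounds])
  then have "AE x in M. \<bar>h x\<bar> \<le> exp (\<bar>l\<bar> * (b - a))"
    using bounds
  proof eventually_elim
    case (elim x)
    then have "\<bar>U x - real_cond_exp M F U x\<bar> \<le> b - a"
      by linarith
    then show ?case
      using exp_mult_le_of_abs_le by (simp add: h_def)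
  qed
  moreover have W_abs: "AE x in M. \<bar>W x\<bar> \<le> C"
    using W_bounds by eventually_elim simp
  ultimately have "integrable M (\<lambda>x. W x * h x)"
    by (intro integrable_mult_AE_bounded) auto
  then have "(\<integral>x. W x * h x \<partial>M) = (\<integral>x. W x * real_cond_exp M F h x \<partial>M)"
    by (intro F.real_cond_exp_intg(2)[symmetric]) auto
  also have "\<dots> \<le> (\<integral>x. W x * c \<partial>M)"
  proof (rule integral_mono_AE')
    show "AE x in M. W x * real_cond_exp M F h x \<le> W x * c"
      using conditional_Hoeffding[OF F U bounds, of l] W_bounds
      by eventually_elim (simp add: h_def c_def mult_left_mono)
    show "AE x in M. 0 \<le> W x * c"
      using W_bounds by eventually_elim (simp add: c_def)
    show "integrable M (\<lambda>x. W x * c)"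
      using W_abs by (intro integrable_mult_left integrable_AE_bounded) auto
  qed
  finally show ?thesis
    by (simp add: h_def c_def)
qed

lemma (in prob_space) Azuma_Hoeffding_mgf:
  fixes G :: "nat \<Rightarrow> 'a measure" and U :: "nat \<Rightarrow> 'a \<Rightarrow> real" and lo hi :: "nat \<Rightarrow> real"
  assumes subalg: "\<And>a. a \<le> N \<Longrightarrow> subalgebra M (G a)"
    and trivial: "\<And>A. A \<in> sets (G 0) \<Longrightarrow> A = {} \<or> A = space M"
    and f [measurable]: "f \<in> borel_measurable (G N)" and f_bound: "AE x in M. \<bar>f x\<bar> \<le> B"
    and U [measurable]: "\<And>a. U a \<in> borel_measurable M"
    and U_bounds: "\<And>a. a \<in> {1..N} \<Longrightarrow> AE x in M. lo a \<le> U a x \<and> U a x \<le> hi a"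
    and increment: "\<And>a. a \<in> {1..N} \<Longrightarrow> AE x in M.
      real_cond_exp M (G a) f x - real_cond_exp M (G (a - 1)) f x
        = U a x - real_cond_exp M (G (a - 1)) (U a) x"
  shows "(\<integral>x. exp (l * (f x - expectation f)) \<partial>M) \<le> exp (l\<^sup>2 * (\<Sum>a=1..N. (hi a - lo a)\<^sup>2) / 8)"
proof -
  have f_M [measurable]: "f \<in> borel_measurable M"
    using measurable_from_subalg[OF subalg f] by simp
  have f_int: "integrable M f"
    using f_bound by (intro integrable_AE_bounded) auto
  define X where "X a = real_cond_exp M (G a) f" for a
  define W where "W a = (\<lambda>x. exp (l * (X a x - expectation f)))" for a
  have [measurable]: "W a \<in> borel_measurable (G a)" "W a \<in> borel_measurable M" for a
    unfolding W_def X_def by measurable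
  have W_bounds: "AE x in M. 0 \<le> W a x \<and> W a x \<le> exp (\<bar>l\<bar> * (2 * B))" if "a \<le> N" for a
    using real_cond_exp_deviation_bound[OF subalg[OF that] f_M f_bound]
  proof eventually_elim
    case (elim x)
    then show ?case
      using exp_mult_le_of_abs_le by (simp add: W_def X_def)
  qed
  have mgf_W: "(\<integral>x. W a x \<partial>M) \<le> exp (l\<^sup>2 * (\<Sum>b=1..a. (hi b - lo b)\<^sup>2) / 8)" if "a \<le> N" for a
    using that
  proof (induction a)
    case 0
    have "W 0 x = 1" if "x \<in> space M" for x
      using real_cond_exp_trivial_subalgebra[OF subalg[OF le0] trivial f_int that] by (simp add: W_def X_def)
    then show ?case
      using prob_space by (simp cong: Bochner_Integration.integral_cong)
  next
    case (Suc a)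
    define c where "c = exp (l\<^sup>2 * (hi (Suc a) - lo (Suc a))\<^sup>2 / 8)"
    have "AE x in M. X (Suc a) x - X a x = U (Suc a) x - real_cond_exp M (G a) (U (Suc a)) x"
      using increment[of "Suc a"] Suc.prems by (simp add: X_def)
    then have "AE x in M. W (Suc a) x = W a x * exp (l * (U (Suc a) x - real_cond_exp M (G a) (U (Suc a)) x))"
    proof eventually_elim
      case (elim x)
      then have "X (Suc a) x - expectation f
          = (X a x - expectation f) + (U (Suc a) x - real_cond_exp M (G a) (U (Suc a)) x)"
        by linarith
      then show ?case
        by (simp only: W_def distrib_left exp_add)
    qed
    then have "(\<integral>x. W (Suc a) x \<partial>M)
        = (\<integral>x. W a x * exp (l * (U (Suc a) x - real_cond_exp M (G a) (U (Suc a)) x)) \<partial>M)"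
      by (intro integral_cong_AE) auto
    also have "\<dots> \<le> (\<integral>x. W a x \<partial>M) * c"
      unfolding c_def using Suc.prems
      by (intro integral_mult_exp_centered_le[OF subalg _ W_bounds U U_bounds]) auto
    also have "\<dots> \<le> exp (l\<^sup>2 * (\<Sum>b=1..a. (hi b - lo b)\<^sup>2) / 8) * c"
      using Suc by (intro mult_right_mono) (auto simp: c_def)
    also have "\<dots> = exp (l\<^sup>2 * (\<Sum>b=1..Suc a. (hi b - lo b)\<^sup>2) / 8)"
      by (simp add: c_def add_divide_distrib distrib_left flip: exp_add)
    finally show ?case .
  qed
  interpret GN: finite_measure_subalgebra M "G N"
    using subalg by unfold_locales simp
  have "AE x in M. X N x = f x"
    unfolding X_def using f_int by (rule GN.real_cond_exp_F_meas) simp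
  then have "AE x in M. exp (l * (f x - expectation f)) = W N x"
    by eventually_elim (simp add: W_def)
  then have "(\<integral>x. exp (l * (f x - expectation f)) \<partial>M) = (\<integral>x. W N x \<partial>M)"
    by (intro integral_cong_AE) auto
  with mgf_W[of N] show ?thesis
    by simp
qed

lemma (in prob_space) real_cond_exp_increment:
  assumes G: "subalgebra M G" and G': "subalgebra M G'" and GG': "sets G \<subseteq> sets G'"
    and HJ: "integrable M H" "integrable M J"
    and f: "\<And>x. x \<in> space M \<Longrightarrow> f x = H x + J x"
    and J: "AE x in M. real_cond_exp M G' J x = real_cond_exp M G J x"
  shows "AE x in M. real_cond_exp M G' f x - real_cond_exp M G f x
           = real_cond_exp M G' H x - real_cond_exp M G (real_cond_exp M G' H) x"
proof -
  interpret G: finite_measure_subalgebra M G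
    using G by unfold_locales
  interpret G': finite_measure_subalgebra M G'
    using G' by unfold_locales
  have "subalgebra G' G"
    using G G' GG' by (simp add: subalgebra_def)
  have [measurable]: "H \<in> borel_measurable M" "J \<in> borel_measurable M"
    using HJ by auto
  have [measurable]: "f \<in> borel_measurable M"
    using f by (subst measurable_cong[where g = "\<lambda>x. H x + J x"]) auto
  have "AE x in M. real_cond_exp M G' f x = real_cond_exp M G' (\<lambda>x. H x + J x) x"
    using f by (intro G'.real_cond_exp_cong) auto
  moreover have "AE x in M. real_cond_exp M G f x = real_cond_exp M G (\<lambda>x. H x + J x) x"
    using f by (intro G.real_cond_exp_cong) auto
  moreover have "AE x in M. real_cond_exp M G' (\<lambda>x. H x + J x) x
      = real_cond_exp M G' H x + real_cond_exp M G' J x"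
    using HJ by (rule G'.real_cond_exp_add)
  moreover have "AE x in M. real_cond_exp M G (\<lambda>x. H x + J x) x
      = real_cond_exp M G H x + real_cond_exp M G J x"
    using HJ by (rule G.real_cond_exp_add)
  moreover have "AE x in M. real_cond_exp M G (real_cond_exp M G' H) x = real_cond_exp M G H x"
    using G' \<open>subalgebra G' G\<close> HJ(1) by (rule G.real_cond_exp_nested_subalg)
  ultimately show ?thesis
    using J by eventually_elim simp
qed

lemma (in prob_space) prob_abs_deviation_ge_le_of_mgf:
  fixes f :: "'a \<Rightarrow> real"
  assumes [measurable]: "f \<in> borel_measurable M"
    and integrable: "\<And>l. integrable M (\<lambda>\<omega>. exp (l * (f \<omega> - expectation f)))"
    and mgf: "\<And>l. (\<integral>\<omega>. exp (l * (f \<omega> - expectation f)) \<partial>M) \<le> exp (l\<^sup>2 * v / 8)"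
    and "0 < v" "0 < x"
  shows "prob {\<omega> \<in> space M. x \<le> \<bar>f \<omega> - expectation f\<bar>} \<le> 2 * exp (- 2 * x\<^sup>2 / v)"
proof -
  have one_sided: "prob {\<omega> \<in> space M. x \<le> \<sigma> * (f \<omega> - expectation f)} \<le> exp (- 2 * x\<^sup>2 / v)"
    if "\<bar>\<sigma>\<bar> = 1" for \<sigma>
  proof -
    define l where "l = 4 * x / v"
    have "0 < l"
      using \<open>0 < v\<close> \<open>0 < x\<close> by (simp add: l_def)
    have "prob {\<omega> \<in> space M. x \<le> \<sigma> * (f \<omega> - expectation f)}
        \<le> exp (- l * x) * (\<integral>\<omega>\<in>space M. exp (l * (\<sigma> * (f \<omega> - expectation f))) \<partial>M)"
    proof (rule Chernoff_ineq_ge[OF \<open>0 < l\<close> _ sets.top])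
      show "set_integrable M (space M) (\<lambda>\<omega>. exp (l * (\<sigma> * (f \<omega> - expectation f))))"
        unfolding set_integrable_def using integrable[of "l * \<sigma>"]
        by (intro integrable_mult_indicator) (simp_all add: mult.assoc)
    qed
    also have "\<dots> \<le> exp (- l * x) * exp ((l * \<sigma>)\<^sup>2 * v / 8)"
      using integrable[of "l * \<sigma>"] mgf[of "l * \<sigma>"] by (simp add: set_integral_space mult.assoc)
    also have "\<dots> = exp (- 2 * x\<^sup>2 / v)"
      using abs_mult_self_eq[of \<sigma>] that \<open>0 < v\<close>
      by (simp add: l_def power_mult_distrib power2_eq_square field_simps flip: exp_add)
    finally show ?thesis .
  qed
  have "{\<omega> \<in> space M. x \<le> \<bar>f \<omega> - expectation f\<bar>}
      = {\<omega> \<in> space M. x \<le> 1 * (f \<omega> - expectation f)} \<union> {\<omega> \<in> space M. x \<le> - 1 * (f \<omega> - expectation f)}"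
    by auto
  then have "prob {\<omega> \<in> space M. x \<le> \<bar>f \<omega> - expectation f\<bar>}
      \<le> prob {\<omega> \<in> space M. x \<le> 1 * (f \<omega> - expectation f)} + prob {\<omega> \<in> space M. x \<le> - 1 * (f \<omega> - expectation f)}"
    by (simp add: measure_Un_le)
  also have "\<dots> \<le> 2 * exp (- 2 * x\<^sup>2 / v)"
    using one_sided[of 1] one_sided[of "- 1"] by simp
  finally show ?thesis .
qed

section \<open>Conditioning on independent coordinates\<close>

lemma (in prob_space) integral_indep_var:
  fixes X Z :: "'a \<Rightarrow> 'b" and \<phi> :: "'b \<Rightarrow> 'b \<Rightarrow> real"
  assumes X [measurable]: "X \<in> measurable M SX" and Z [measurable]: "Z \<in> measurable M SZ"
    and indep: "indep_var SX X SZ Z"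
    and \<phi> [measurable]: "case_prod \<phi> \<in> borel_measurable (SX \<Otimes>\<^sub>M SZ)"
    and bound: "\<And>x z. \<bar>\<phi> x z\<bar> \<le> B"
  shows "(\<integral>\<omega>. \<phi> (X \<omega>) (Z \<omega>) \<partial>M) = (\<integral>\<omega>. (\<integral>z. \<phi> (X \<omega>) z \<partial>distr M SZ Z) \<partial>M)"
proof -
  define MX where "MX = distr M SX X"
  define MZ where "MZ = distr M SZ Z"
  interpret MX: prob_space MX
    unfolding MX_def by (rule prob_space_distr[OF X])
  interpret MZ: prob_space MZ
    unfolding MZ_def by (rule prob_space_distr[OF Z])
  interpret MXZ: pair_prob_space MX MZ ..
  have [measurable_cong]: "sets MX = sets SX" "sets MZ = sets SZ"
    by (simp_all add: MX_def MZ_def)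
  have "(\<integral>\<omega>. \<phi> (X \<omega>) (Z \<omega>) \<partial>M) = (\<integral>p. case_prod \<phi> p \<partial>distr M (SX \<Otimes>\<^sub>M SZ) (\<lambda>\<omega>. (X \<omega>, Z \<omega>)))"
    by (subst integral_distr) auto
  also have "\<dots> = (\<integral>p. case_prod \<phi> p \<partial>(MX \<Otimes>\<^sub>M MZ))"
    using indep unfolding indep_var_distribution_eq MX_def MZ_def by simp
  also have "\<dots> = (\<integral>x. (\<integral>z. \<phi> x z \<partial>MZ) \<partial>MX)"
    using bound by (intro MXZ.integral_fst[symmetric] MXZ.P.integrable_AE_bounded[where B = B]) auto
  also have "\<dots> = (\<integral>\<omega>. (\<integral>z. \<phi> (X \<omega>) z \<partial>MZ) \<partial>M)"
    unfolding MX_def by (rule integral_distr) measurable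
  finally show ?thesis
    by (simp add: MZ_def)
qed

lemma (in prob_space) real_cond_exp_indep_var:
  assumes X [measurable]: "X \<in> measurable M SX" and Z [measurable]: "Z \<in> measurable M SZ"
    and indep: "indep_var SX X SZ Z"
    and \<phi> [measurable]: "case_prod \<phi> \<in> borel_measurable (SX \<Otimes>\<^sub>M SZ)"
    and bound: "\<And>x z. \<bar>\<phi> x z\<bar> \<le> B"
  shows "AE \<omega> in M. real_cond_exp M (vimage_algebra (space M) X SX) (\<lambda>\<omega>. \<phi> (X \<omega>) (Z \<omega>)) \<omega>
           = (\<integral>z. \<phi> (X \<omega>) z \<partial>distr M SZ Z)"
proof -
  define G where "G = vimage_algebra (space M) X SX"
  interpret G: finite_measure_subalgebra M G
    unfolding G_def using sets_image_in_sets[OF refl X] by unfold_locales (simp add: subalgebra_def)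
  define MZ where "MZ = distr M SZ Z"
  interpret MZ: prob_space MZ
    unfolding MZ_def by (rule prob_space_distr[OF Z])
  have [measurable_cong]: "sets MZ = sets SZ"
    by (simp add: MZ_def)
  have "0 \<le> B"
    using bound[of undefined undefined] by linarith
  define \<psi> where "\<psi> x = (\<integral>z. \<phi> x z \<partial>MZ)" for x
  have [measurable]: "\<psi> \<in> borel_measurable SX"
    unfolding \<psi>_def by measurable
  have \<psi>_bound: "\<bar>\<psi> x\<bar> \<le> B" for x
  proof -
    have "\<bar>\<psi> x\<bar> \<le> (\<integral>z. \<bar>\<phi> x z\<bar> \<partial>MZ)"
      unfolding \<psi>_def by (rule integral_abs_bound)
    also have "\<dots> \<le> (\<integral>z. B \<partial>MZ)"
      using bound \<open>0 \<le> B\<close> by (intro integral_mono_AE') auto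
    finally show ?thesis
      by (simp add: MZ.prob_space)
  qed
  have "X \<in> measurable G SX"
    unfolding G_def by (rule measurable_vimage_algebra1) (use measurable_space[OF X] in blast)
  then have [measurable]: "(\<lambda>\<omega>. \<psi> (X \<omega>)) \<in> borel_measurable G"
    by measurable
  have "AE \<omega> in M. real_cond_exp M G (\<lambda>\<omega>. \<phi> (X \<omega>) (Z \<omega>)) \<omega> = \<psi> (X \<omega>)"
  proof (rule G.real_cond_exp_charact)
    fix A assume "A \<in> sets G"
    then obtain C where C [measurable]: "C \<in> sets SX" and A: "A = X -` C \<inter> space M"
      unfolding G_def using sets_vimage_algebra2[of X "space M" SX] measurable_space[OF X] by auto
    have "(\<integral>\<omega>\<in>A. \<phi> (X \<omega>) (Z \<omega>) \<partial>M) = (\<integral>\<omega>. indicator C (X \<omega>) * \<phi> (X \<omega>) (Z \<omega>) \<partial>M)"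
      unfolding set_lebesgue_integral_def A
      by (intro Bochner_Integration.integral_cong) (auto split: split_indicator)
    also have "\<dots> = (\<integral>\<omega>. indicator C (X \<omega>) * \<psi> (X \<omega>) \<partial>M)"
      using bound \<open>0 \<le> B\<close>
      by (subst integral_indep_var[OF X Z indep, where B = B]) (auto simp: \<psi>_def MZ_def split: split_indicator)
    also have "\<dots> = (\<integral>\<omega>\<in>A. \<psi> (X \<omega>) \<partial>M)"
      unfolding set_lebesgue_integral_def A
      by (intro Bochner_Integration.integral_cong) (auto split: split_indicator)
    finally show "(\<integral>\<omega>\<in>A. \<phi> (X \<omega>) (Z \<omega>) \<partial>M) = (\<integral>\<omega>\<in>A. \<psi> (X \<omega>) \<partial>M)" .
  qed (use bound \<psi>_bound in \<open>auto intro!: integrable_AE_bounded[where B = B]\<close>)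
  then show ?thesis
    by (simp add: G_def \<psi>_def MZ_def)
qed

definition coords :: "(nat \<Rightarrow> 'a \<Rightarrow> 'b) \<Rightarrow> nat set \<Rightarrow> 'a \<Rightarrow> nat \<Rightarrow> 'b" where
  "coords Y I \<omega> = (\<lambda>i\<in>I. Y i \<omega>)"

definition coord_algebra :: "'a measure \<Rightarrow> (nat \<Rightarrow> 'a \<Rightarrow> 'b::topological_space) \<Rightarrow> nat set \<Rightarrow> 'a measure" where
  "coord_algebra M Y I = vimage_algebra (space M) (coords Y I) (PiM I (\<lambda>_. borel))"

lemma measurable_coords [measurable]:
  "(\<And>i. i \<in> I \<Longrightarrow> Y i \<in> borel_measurable M) \<Longrightarrow> coords Y I \<in> measurable M (PiM I (\<lambda>_. borel))"
  unfolding coords_def by (rule measurable_restrict)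

lemma measurable_coords_coord_algebra:
  "coords Y I \<in> measurable (coord_algebra M Y I) (PiM I (\<lambda>_. borel))"
  unfolding coord_algebra_def by (rule measurable_vimage_algebra1) (auto simp: coords_def space_PiM)

lemma subalgebra_coord_algebra:
  assumes "\<And>i. i \<in> I \<Longrightarrow> Y i \<in> borel_measurable M"
  shows "subalgebra M (coord_algebra M Y I)"
  unfolding coord_algebra_def subalgebra_def
  using sets_image_in_sets[OF refl measurable_coords[OF assms]] by simp

lemma restrict_coords: "J \<subseteq> I \<Longrightarrow> restrict (coords Y I \<omega>) J = coords Y J \<omega>"
  by (auto simp: coords_def restrict_def fun_eq_iff)

lemma sets_coord_algebra_mono:
  assumes "J \<subseteq> I"
  shows "sets (coord_algebra M Y J) \<subseteq> sets (coord_algebra M Y I)"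
proof -
  have "(\<lambda>\<omega>. restrict (coords Y I \<omega>) J) \<in> measurable (coord_algebra M Y I) (PiM J (\<lambda>_. borel))"
    using measurable_comp[OF measurable_coords_coord_algebra measurable_restrict_subset[OF assms]]
    by (simp add: comp_def)
  then have "coords Y J \<in> measurable (coord_algebra M Y I) (PiM J (\<lambda>_. borel))"
    using assms by (simp add: restrict_coords)
  then show ?thesis
    unfolding coord_algebra_def[of M Y J] by (rule sets_image_in_sets[rotated]) (simp add: coord_algebra_def)
qed

lemma sets_coord_algebra_empty:
  assumes "A \<in> sets (coord_algebra M Y {})"
  shows "A = {} \<or> A = space M"
proof -
  have "coords Y {} \<in> space M \<rightarrow> space (PiM {} (\<lambda>_. borel))"
    by (auto simp: coords_def space_PiM)
  then have "sets (coord_algebra M Y {}) = {coords Y {} -` C \<inter> space M | C. C \<in> sets (PiM {} (\<lambda>_. borel))}"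
    unfolding coord_algebra_def by (rule sets_vimage_algebra2)
  then obtain C where "A = coords Y {} -` C \<inter> space M"
    using assms by auto
  moreover have "coords Y {} \<omega> = (\<lambda>_. undefined)" for \<omega>
    by (simp add: coords_def restrict_def)
  ultimately show ?thesis
    by (cases "(\<lambda>_. undefined) \<in> C") auto
qed

lemma (in prob_space) indep_var_coords_subset:
  assumes "indep_var (PiM I (\<lambda>_. borel)) (coords Y I) (PiM F (\<lambda>_. borel)) (coords Y F)"
    and "I' \<subseteq> I" "F' \<subseteq> F"
  shows "indep_var (PiM I' (\<lambda>_. borel)) (coords Y I') (PiM F' (\<lambda>_. borel)) (coords Y F')"
proof -
  have "indep_var (PiM I' (\<lambda>_. borel)) ((\<lambda>x. restrict x I') \<circ> coords Y I)
      (PiM F' (\<lambda>_. borel)) ((\<lambda>x. restrict x F') \<circ> coords Y F)"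
    by (rule indep_var_compose[OF assms(1) measurable_restrict_subset[OF assms(2)]
                                         measurable_restrict_subset[OF assms(3)]])
  then show ?thesis
    using assms by (simp add: comp_def restrict_coords)
qed

lemma (in prob_space) real_cond_exp_coord_algebra_indep:
  fixes Y :: "nat \<Rightarrow> 'a \<Rightarrow> 'b::topological_space" and \<phi> :: "(nat \<Rightarrow> 'b) \<Rightarrow> real"
  assumes Y [measurable]: "\<And>i. i \<in> I \<union> F \<Longrightarrow> Y i \<in> borel_measurable M"
    and "I' \<subseteq> I"
    and indep: "indep_var (PiM I (\<lambda>_. borel)) (coords Y I) (PiM F (\<lambda>_. borel)) (coords Y F)"
    and \<phi> [measurable]: "\<phi> \<in> borel_measurable (PiM (I' \<union> F) (\<lambda>_. borel))"
    and bound: "\<And>y. \<bar>\<phi> y\<bar> \<le> B"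
  shows "AE \<omega> in M. real_cond_exp M (coord_algebra M Y I) (\<lambda>\<omega>. \<phi> (coords Y (I' \<union> F) \<omega>)) \<omega>
           = real_cond_exp M (coord_algebra M Y I') (\<lambda>\<omega>. \<phi> (coords Y (I' \<union> F) \<omega>)) \<omega>"
proof -
  define \<psi> where
    "\<psi> x = (\<integral>z. \<phi> (merge I' F (x, z)) \<partial>distr M (PiM F (\<lambda>_. borel)) (coords Y F))" for x
  have cond_exp_eq: "AE \<omega> in M. real_cond_exp M (coord_algebra M Y J) (\<lambda>\<omega>. \<phi> (coords Y (I' \<union> F) \<omega>)) \<omega>
      = \<psi> (coords Y J \<omega>)" if "I' \<subseteq> J" "J \<subseteq> I" for J
  proof -
    have "coords Y J \<in> measurable M (PiM J (\<lambda>_. borel))" "coords Y F \<in> measurable M (PiM F (\<lambda>_. borel))"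
      using \<open>J \<subseteq> I\<close> by (auto intro!: measurable_coords)
    moreover have "indep_var (PiM J (\<lambda>_. borel)) (coords Y J) (PiM F (\<lambda>_. borel)) (coords Y F)"
      using indep \<open>J \<subseteq> I\<close> by (rule indep_var_coords_subset) simp
    moreover have "(\<lambda>p. (restrict (fst p) I', snd p))
        \<in> measurable (PiM J (\<lambda>_. borel) \<Otimes>\<^sub>M PiM F (\<lambda>_. borel)) (PiM I' (\<lambda>_. borel) \<Otimes>\<^sub>M PiM F (\<lambda>_. borel))"
      using measurable_restrict_subset[OF \<open>I' \<subseteq> J\<close>] by measurable
    from measurable_comp[OF this measurable_comp[OF measurable_merge \<phi>]]
    have "(\<lambda>(x, z). \<phi> (merge I' F (x, z))) \<in> borel_measurable (PiM J (\<lambda>_. borel) \<Otimes>\<^sub>M PiM F (\<lambda>_. borel))"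
      by (simp add: comp_def case_prod_beta')
    moreover have "coords Y (I' \<union> F) \<omega> = merge I' F (coords Y J \<omega>, coords Y F \<omega>)" for \<omega>
      using that by (auto simp: coords_def merge_def fun_eq_iff)
    ultimately show ?thesis
      using real_cond_exp_indep_var[of "coords Y J" _ "coords Y F" _ "\<lambda>x z. \<phi> (merge I' F (x, z))" B]
        bound by (simp add: coord_algebra_def \<psi>_def)
  qed
  have "\<psi> (coords Y I \<omega>) = \<psi> (coords Y I' \<omega>)" for \<omega>
    using \<open>I' \<subseteq> I\<close> unfolding \<psi>_def
    by (metis merge_restrict(1) restrict_coords)
  then show ?thesis
    using cond_exp_eq[of I] cond_exp_eq[of I'] \<open>I' \<subseteq> I\<close> by auto
qed

section \<open>The empirical kernel cost\<close>

lemma one_div_mult_le: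
  fixes c S B :: real
  assumes "0 \<le> c" "0 \<le> B" "S \<le> c * B"
  shows "(1 / c) * S \<le> B"
  using assms by (cases "c = 0") (simp_all add: field_simps)

lemma card_Times_diff_Times_le:
  assumes "finite I"
  shows "card (I \<times> I - D \<times> D) \<le> 2 * card I * card (I - D)"
proof -
  have "I \<times> I - D \<times> D \<subseteq> (I - D) \<times> I \<union> I \<times> (I - D)"
    by auto
  then have "card (I \<times> I - D \<times> D) \<le> card ((I - D) \<times> I \<union> I \<times> (I - D))"
    using assms by (intro card_mono) auto
  also have "\<dots> \<le> card ((I - D) \<times> I) + card (I \<times> (I - D))"
    by (rule card_Un_le)
  also have "\<dots> = 2 * card I * card (I - D)"
    by (simp add: card_cartesian_product)
  finally show ?thesis .
qed

text \<open>The cost of an index set \<open>D\<close> with the normaliser \<open>c\<close> kept fixed, so that indices can be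
  dropped from \<open>{s..e}\<close> while keeping the factor \<open>1 / (e - s + 1)\<close> of \<^const>\<open>Chat\<close>.\<close>

definition segment_cost :: "('b \<Rightarrow> 'b \<Rightarrow> real) \<Rightarrow> nat set \<Rightarrow> real \<Rightarrow> (nat \<Rightarrow> 'b) \<Rightarrow> real" where
  "segment_cost k D c y = (\<Sum>t\<in>D. k (y t) (y t)) - (1 / c) * (\<Sum>i\<in>D. \<Sum>j\<in>D. k (y i) (y j))"

lemma Chat_eq_segment_cost: "Chat k Y s e \<omega> = segment_cost k {s..e} (real (e - s + 1)) (\<lambda>t. Y t \<omega>)"
  unfolding Chat_def segment_cost_def by simp

lemma segment_cost_cong: "(\<And>t. t \<in> D \<Longrightarrow> y t = y' t) \<Longrightarrow> segment_cost k D c y = segment_cost k D c y'"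
  unfolding segment_cost_def by simp

lemma borel_measurable_segment_cost:
  fixes k :: "'b::topological_space \<Rightarrow> 'b \<Rightarrow> real"
  assumes k: "case_prod k \<in> borel_measurable (borel \<Otimes>\<^sub>M borel)"
    and g: "\<And>t. t \<in> D \<Longrightarrow> (\<lambda>x. g x t) \<in> borel_measurable N"
  shows "(\<lambda>x. segment_cost k D c (g x)) \<in> borel_measurable N"
proof -
  have "(\<lambda>x. k (g x i) (g x j)) \<in> borel_measurable N" if "i \<in> D" "j \<in> D" for i j
    using measurable_comp[OF measurable_Pair[OF g g] k, OF that] by (simp add: comp_def)
  then show ?thesis
    unfolding segment_cost_def by measurable
qed

lemma abs_segment_cost_le:
  assumes k: "\<And>u v. 0 \<le> k u v \<and> k u v \<le> Mk" and c: "real (card D) \<le> c"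
  shows "\<bar>segment_cost k D c y\<bar> \<le> real (card D) * Mk"
proof -
  have diag: "0 \<le> (\<Sum>t\<in>D. k (y t) (y t))" "(\<Sum>t\<in>D. k (y t) (y t)) \<le> real (card D) * Mk"
    using k sum_bounded_above[of D "\<lambda>t. k (y t) (y t)" Mk] by (auto intro: sum_nonneg)
  have "0 \<le> Mk"
    using k[of undefined undefined] by linarith
  have "(\<Sum>i\<in>D. \<Sum>j\<in>D. k (y i) (y j)) \<le> (\<Sum>i\<in>D. real (card D) * Mk)"
    using k sum_bounded_above[of D "\<lambda>j. k (y _) (y j)" Mk] by (intro sum_mono) auto
  also have "\<dots> \<le> c * (real (card D) * Mk)"
    using c \<open>0 \<le> Mk\<close> by (simp add: mult_right_mono)
  finally have "(1 / c) * (\<Sum>i\<in>D. \<Sum>j\<in>D. k (y i) (y j)) \<le> real (card D) * Mk"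
    using c \<open>0 \<le> Mk\<close> by (intro one_div_mult_le) auto
  moreover have "0 \<le> (1 / c) * (\<Sum>i\<in>D. \<Sum>j\<in>D. k (y i) (y j))"
    using k c by (intro mult_nonneg_nonneg sum_nonneg) auto
  ultimately show ?thesis
    unfolding segment_cost_def using diag by linarith
qed

lemma segment_cost_diff_bounds:
  assumes k: "\<And>u v. 0 \<le> k u v \<and> k u v \<le> Mk" and I: "finite I" and "D \<subseteq> I"
  defines "n \<equiv> real (card I)" and "r \<equiv> real (card (I - D))"
  shows "- 2 * r * Mk \<le> segment_cost k I n y - segment_cost k D n y"
    and "segment_cost k I n y - segment_cost k D n y \<le> r * Mk"
proof -
  have "0 \<le> Mk"
    using k[of undefined undefined] by linarith
  define g where "g p = k (y (fst p)) (y (snd p))" for p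
  have pairs: "(\<Sum>i\<in>A. \<Sum>j\<in>A. k (y i) (y j)) = (\<Sum>p\<in>A \<times> A. g p)" for A
    by (simp add: g_def sum.cartesian_product split_beta)
  have "D \<times> D \<subseteq> I \<times> I"
    using \<open>D \<subseteq> I\<close> by auto
  then have "segment_cost k I n y - segment_cost k D n y
      = (\<Sum>t\<in>I - D. k (y t) (y t)) - (1 / n) * (\<Sum>p\<in>I \<times> I - D \<times> D. g p)"
    unfolding segment_cost_def pairs
    using sum.subset_diff[OF \<open>D \<subseteq> I\<close> I, of "\<lambda>t. k (y t) (y t)"]
      sum.subset_diff[OF \<open>D \<times> D \<subseteq> I \<times> I\<close>, of g] I
    by (simp add: algebra_simps)
  moreover have "0 \<le> (\<Sum>t\<in>I - D. k (y t) (y t))" "(\<Sum>t\<in>I - D. k (y t) (y t)) \<le> r * Mk"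
    using k sum_bounded_above[of "I - D" "\<lambda>t. k (y t) (y t)" Mk] by (auto simp: r_def intro: sum_nonneg)
  moreover have "0 \<le> (1 / n) * (\<Sum>p\<in>I \<times> I - D \<times> D. g p)"
    using k by (auto simp: n_def g_def intro!: sum_nonneg divide_nonneg_nonneg)
  moreover have "(1 / n) * (\<Sum>p\<in>I \<times> I - D \<times> D. g p) \<le> 2 * r * Mk"
  proof (rule one_div_mult_le)
    have "real (card (I \<times> I - D \<times> D)) \<le> real (2 * card I * card (I - D))"
      using card_Times_diff_Times_le[OF I] by (simp only: of_nat_le_iff)
    then have card_le: "real (card (I \<times> I - D \<times> D)) \<le> n * (2 * r)"
      by (simp add: n_def r_def)
    have "(\<Sum>p\<in>I \<times> I - D \<times> D. g p) \<le> real (card (I \<times> I - D \<times> D)) * Mk"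
      using k sum_bounded_above[of "I \<times> I - D \<times> D" g Mk] by (simp add: g_def)
    also have "\<dots> \<le> n * (2 * r) * Mk"
      using card_le \<open>0 \<le> Mk\<close> by (rule mult_right_mono)
    finally show "(\<Sum>p\<in>I \<times> I - D \<times> D. g p) \<le> n * (2 * r * Mk)"
      by (simp only: mult.assoc)
  qed (simp_all add: n_def r_def \<open>0 \<le> Mk\<close>)
  ultimately show "- 2 * r * Mk \<le> segment_cost k I n y - segment_cost k D n y"
    and "segment_cost k I n y - segment_cost k D n y \<le> r * Mk"
    by linarith+
qed

section \<open>Blocks of length \<open>m + 1\<close>\<close>

text \<open>Block \<open>a \<ge> 1\<close> of \<open>{0..<n}\<close> is \<open>{block_end m n (a - 1)..<block_end m n a}\<close>; the window
  of block \<open>a\<close> consists of the block and the \<open>m\<close> indices following it, cut off at \<open>n\<close>.\<close>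

definition block_end :: "nat \<Rightarrow> nat \<Rightarrow> nat \<Rightarrow> nat" where
  "block_end m n a = min (a * Suc m) n"

definition window_length :: "nat \<Rightarrow> nat \<Rightarrow> nat \<Rightarrow> nat" where
  "window_length m n a = min (block_end m n a + m) n - block_end m n (a - 1)"

lemma block_end_0 [simp]: "block_end m n 0 = 0"
  by (simp add: block_end_def)

lemma block_end_le: "block_end m n a \<le> n"
  by (simp add: block_end_def)

lemma block_end_self [simp]: "block_end m n n = n"
  by (simp add: block_end_def)

lemma block_end_mono: "a \<le> b \<Longrightarrow> block_end m n a \<le> block_end m n b"
  unfolding block_end_def by (intro min.mono mult_le_mono1) auto

lemma block_end_Suc_le: "block_end m n (Suc a) \<le> block_end m n a + Suc m"
  by (simp add: block_end_def)

lemma window_length_le: "window_length m n a \<le> 2 * m + 1"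
  using block_end_Suc_le[of m n "a - 1"] by (cases a) (auto simp: window_length_def)

lemma sum_window_length_le: "(\<Sum>a=1..n. window_length m n a) \<le> 2 * n"
proof -
  have "(\<Sum>a=1..N. window_length m n a) \<le> block_end m n (Suc N) + block_end m n N" for N
  proof (induction N)
    case (Suc N)
    have "min (block_end m n (Suc N) + m) n \<le> block_end m n (Suc (Suc N))"
      by (simp add: block_end_def)
    moreover have "block_end m n N \<le> min (block_end m n (Suc N) + m) n"
      using block_end_mono[of N "Suc N" m n] by (simp add: block_end_le)
    ultimately show ?case
      using Suc.IH by (simp add: window_length_def)
  qed simp
  from this[of n] show ?thesis
    using block_end_le[where m = m and n = n and a = "Suc n"] block_end_le[where m = m and n = n and a = n]
    by linarith
qed

lemma sum_window_length_sq_le: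
  "(\<Sum>a=1..n. (real (window_length m n a))\<^sup>2) \<le> 2 * real n * (2 * real m + 1)"
proof -
  have "(\<Sum>a=1..n. (real (window_length m n a))\<^sup>2) \<le> (\<Sum>a=1..n. real (window_length m n a) * (2 * real m + 1))"
  proof (intro sum_mono)
    fix a
    have "real (window_length m n a) \<le> real (2 * m + 1)"
      using window_length_le by (simp only: of_nat_le_iff)
    then show "(real (window_length m n a))\<^sup>2 \<le> real (window_length m n a) * (2 * real m + 1)"
      unfolding power2_eq_square by (intro mult_left_mono) auto
  qed
  also have "\<dots> = real (\<Sum>a=1..n. window_length m n a) * (2 * real m + 1)"
    by (simp add: sum_distrib_right)
  also have "\<dots> \<le> 2 * real n * (2 * real m + 1)"
  proof (intro mult_right_mono)
    have "real (\<Sum>a=1..n. window_length m n a) \<le> real (2 * n)"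
      using sum_window_length_le by (simp only: of_nat_le_iff)
    then show "real (\<Sum>a=1..n. window_length m n a) \<le> 2 * real n"
      by simp
  qed simp
  finally show ?thesis .
qed

section \<open>Segments of an \<open>m\<close>-dependent sequence\<close>

locale m_dependent_kernel_cost = prob_space +
  fixes Y :: "nat \<Rightarrow> 'a \<Rightarrow> 'b::topological_space" and T m s e :: nat
    and k :: "'b \<Rightarrow> 'b \<Rightarrow> real" and Mk :: real
  assumes measurable_Y: "\<And>t. t \<in> {1..T} \<Longrightarrow> Y t \<in> borel_measurable M"
    and m_dependent: "\<And>t. t \<le> T \<Longrightarrow> indep_var (PiM {1..t} (\<lambda>_. borel)) (coords Y {1..t})
          (PiM {t+m+1..T} (\<lambda>_. borel)) (coords Y {t+m+1..T})"
    and measurable_k: "case_prod k \<in> borel_measurable (borel \<Otimes>\<^sub>M borel)"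
    and k_bounds: "\<And>u v. 0 \<le> k u v \<and> k u v \<le> Mk"
    and segment: "1 \<le> s" "s \<le> e" "e \<le> T"
begin

abbreviation n :: nat where "n \<equiv> e - s + 1"

definition past :: "nat \<Rightarrow> nat set" where
  "past a = {s..<s + block_end m n a}"

definition far :: "nat \<Rightarrow> nat set" where
  "far a = {s + min (block_end m n a + m) n..<s + n}"

text \<open>By \<open>m\<close>-dependence \<open>far a\<close> is independent of \<open>past a\<close>, so the cost with the window of
  block \<open>a\<close> left out has the same conditional expectation given \<open>past a\<close> and \<open>past (a - 1)\<close>.\<close>

definition leave_out_cost :: "nat \<Rightarrow> 'a \<Rightarrow> real" where
  "leave_out_cost a \<omega> = segment_cost k (past (a - 1) \<union> far a) (real n) (\<lambda>t. Y t \<omega>)"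

lemma segment_eq_atLeastLessThan: "{s..e} = {s..<s + n}"
  using segment by auto

lemma past_subset: "past a \<subseteq> {s..e}"
  using block_end_le[of m n a] by (auto simp: past_def segment_eq_atLeastLessThan)

lemma far_subset: "far a \<subseteq> {s..e}"
  by (auto simp: far_def segment_eq_atLeastLessThan)

lemma past_n: "past n = {s..e}"
  by (simp add: past_def segment_eq_atLeastLessThan)

lemma past_mono: "a \<le> b \<Longrightarrow> past a \<subseteq> past b"
  using block_end_mono[of a b m n] by (auto simp: past_def)

lemma measurable_Y_segment [measurable]: "t \<in> {s..e} \<Longrightarrow> Y t \<in> borel_measurable M"
  using segment by (intro measurable_Y) auto

lemma subalgebra_past: "subalgebra M (coord_algebra M Y (past a))"
  using past_subset measurable_Y_segment by (intro subalgebra_coord_algebra) blast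

lemma card_segment_diff_past_far:
  assumes "1 \<le> a"
  shows "card ({s..e} - (past (a - 1) \<union> far a)) = window_length m n a"
proof -
  have "block_end m n (a - 1) \<le> min (block_end m n a + m) n"
    using block_end_mono[of "a - 1" a m n] by (simp add: block_end_le)
  then have "{s..e} - (past (a - 1) \<union> far a)
      = {s + block_end m n (a - 1)..<s + min (block_end m n a + m) n}"
    using segment by (auto simp: past_def far_def segment_eq_atLeastLessThan min_def)
  then show ?thesis
    by (simp add: window_length_def)
qed

lemma abs_Chat_le: "\<bar>Chat k Y s e \<omega>\<bar> \<le> real n * Mk"
  using abs_segment_cost_le[of k Mk, OF k_bounds, of "{s..e}" "real n"]
  by (simp add: Chat_eq_segment_cost segment_eq_atLeastLessThan)

lemma abs_segment_cost_past_far_le: "\<bar>segment_cost k (past (a - 1) \<union> far a) (real n) y\<bar> \<le> real n * Mk"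
proof -
  have "card (past (a - 1) \<union> far a) \<le> n"
    using card_mono[OF _ Un_least[OF past_subset far_subset]] by (simp add: segment_eq_atLeastLessThan)
  moreover have "0 \<le> Mk"
    using k_bounds[of undefined undefined] by linarith
  ultimately show ?thesis
    using abs_segment_cost_le[of k Mk, OF k_bounds, of "past (a - 1) \<union> far a" "real n" y]
    by (smt (verit) mult_right_mono of_nat_le_iff)
qed

lemma measurable_leave_out_cost [measurable]: "leave_out_cost a \<in> borel_measurable M"
proof -
  have "past (a - 1) \<union> far a \<subseteq> {s..e}"
    using past_subset far_subset by blast
  then show ?thesis
    unfolding leave_out_cost_def[abs_def]
    by (intro borel_measurable_segment_cost[OF measurable_k]) (auto intro: measurable_Y_segment)
qed

lemma Chat_minus_leave_out_cost_bounds: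
  assumes "1 \<le> a"
  shows "- 2 * real (window_length m n a) * Mk \<le> Chat k Y s e \<omega> - leave_out_cost a \<omega>
           \<and> Chat k Y s e \<omega> - leave_out_cost a \<omega> \<le> real (window_length m n a) * Mk"
proof -
  have "card {s..e} = n"
    using segment by simp
  with segment_cost_diff_bounds[where k = k and Mk = Mk and D = "past (a - 1) \<union> far a"
      and y = "\<lambda>t. Y t \<omega>", OF k_bounds finite_atLeastAtMost Un_least[OF past_subset far_subset]]
  show ?thesis
    unfolding Chat_eq_segment_cost leave_out_cost_def card_segment_diff_past_far[OF assms] by simp
qed

lemma real_cond_exp_leave_out_cost:
  assumes "a \<in> {1..n}"
  shows "AE \<omega> in M. real_cond_exp M (coord_algebra M Y (past a)) (leave_out_cost a) \<omega>
           = real_cond_exp M (coord_algebra M Y (past (a - 1))) (leave_out_cost a) \<omega>"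
proof -
  define t where "t = s + block_end m n a - 1"
  have "t \<le> T" "past a \<subseteq> {1..t}" "far a \<subseteq> {t + m + 1..T}"
    using segment block_end_le[of m n a] by (auto simp: t_def past_def far_def)
  then have indep: "indep_var (PiM (past a) (\<lambda>_. borel)) (coords Y (past a))
      (PiM (far a) (\<lambda>_. borel)) (coords Y (far a))"
    by (intro indep_var_coords_subset[OF m_dependent])
  define \<phi> where "\<phi> = segment_cost k (past (a - 1) \<union> far a) (real n)"
  have \<phi>: "\<phi> \<in> borel_measurable (PiM (past (a - 1) \<union> far a) (\<lambda>_. borel))"
    unfolding \<phi>_def by (intro borel_measurable_segment_cost[OF measurable_k]) auto
  have "Y i \<in> borel_measurable M" if "i \<in> past a \<union> far a" for i
    using that past_subset far_subset by (blast intro: measurable_Y_segment)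
  moreover have "\<bar>\<phi> y\<bar> \<le> real n * Mk" for y
    unfolding \<phi>_def by (rule abs_segment_cost_past_far_le)
  moreover have "leave_out_cost a = (\<lambda>\<omega>. \<phi> (coords Y (past (a - 1) \<union> far a) \<omega>))"
    unfolding leave_out_cost_def \<phi>_def by (intro ext segment_cost_cong) (simp add: coords_def)
  ultimately show ?thesis
    using real_cond_exp_coord_algebra_indep[OF _ past_mono[OF diff_le_self] indep \<phi>] by metis
qed

lemma measurable_Chat_past_n: "Chat k Y s e \<in> borel_measurable (coord_algebra M Y (past n))"
proof -
  have "(\<lambda>\<omega>. segment_cost k {s..e} (real n) (coords Y {s..e} \<omega>)) \<in> borel_measurable (coord_algebra M Y {s..e})"
  proof (rule borel_measurable_segment_cost[OF measurable_k])
    fix t assume "t \<in> {s..e}"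
    from measurable_comp[OF measurable_coords_coord_algebra measurable_component_singleton[OF this]]
    show "(\<lambda>\<omega>. coords Y {s..e} \<omega> t) \<in> borel_measurable (coord_algebra M Y {s..e})"
      by (simp add: comp_def)
  qed
  moreover have "Chat k Y s e = (\<lambda>\<omega>. segment_cost k {s..e} (real n) (coords Y {s..e} \<omega>))"
    unfolding Chat_eq_segment_cost by (intro ext segment_cost_cong) (simp add: coords_def)
  ultimately show ?thesis
    unfolding past_n by simp
qed

lemma measurable_Chat [measurable]: "Chat k Y s e \<in> borel_measurable M"
  using measurable_from_subalg[OF subalgebra_past measurable_Chat_past_n] .

lemma Chat_mgf:
  "(\<integral>\<omega>. exp (l * (Chat k Y s e \<omega> - expectation (Chat k Y s e))) \<partial>M)
     \<le> exp (l\<^sup>2 * (18 * Mk\<^sup>2 * real n * (2 * real m + 1)) / 8)"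
proof -
  define G where "G a = coord_algebra M Y (past a)" for a
  define H where "H a \<omega> = Chat k Y s e \<omega> - leave_out_cost a \<omega>" for a \<omega>
  define w where "w a = real (window_length m n a)" for a
  have [measurable]: "H a \<in> borel_measurable M" for a
    unfolding H_def[abs_def] by measurable
  have J_bound: "\<bar>leave_out_cost a \<omega>\<bar> \<le> real n * Mk" for a \<omega>
    unfolding leave_out_cost_def by (rule abs_segment_cost_past_far_le)
  have H_bound: "\<bar>H a \<omega>\<bar> \<le> 2 * (real n * Mk)" for a \<omega>
    using J_bound[of a \<omega>] abs_Chat_le[of \<omega>] unfolding H_def by linarith
  have integrable: "integrable M (leave_out_cost a)" "integrable M (H a)" for a
    by (auto intro!: integrable_AE_bounded AE_I2 J_bound H_bound)
  have "(\<integral>\<omega>. exp (l * (Chat k Y s e \<omega> - expectation (Chat k Y s e))) \<partial>M)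
      \<le> exp (l\<^sup>2 * (\<Sum>a=1..n. (w a * Mk - - 2 * w a * Mk)\<^sup>2) / 8)"
  proof (rule Azuma_Hoeffding_mgf[where G = G and U = "\<lambda>a. real_cond_exp M (G a) (H a)"])
    show "subalgebra M (G a)" for a
      unfolding G_def by (rule subalgebra_past)
    show "A = {} \<or> A = space M" if "A \<in> sets (G 0)" for A
      using that sets_coord_algebra_empty by (simp add: G_def past_def)
    show "Chat k Y s e \<in> borel_measurable (G n)"
      unfolding G_def by (rule measurable_Chat_past_n)
    show "AE \<omega> in M. \<bar>Chat k Y s e \<omega>\<bar> \<le> real n * Mk"
      by (intro AE_I2 abs_Chat_le)
    show "AE \<omega> in M. - 2 * w a * Mk \<le> real_cond_exp M (G a) (H a) \<omega>
        \<and> real_cond_exp M (G a) (H a) \<omega> \<le> w a * Mk" if "a \<in> {1..n}" for a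
      using that Chat_minus_leave_out_cost_bounds
      by (intro real_cond_exp_bounds) (auto simp: G_def H_def w_def subalgebra_past)
    show "AE \<omega> in M. real_cond_exp M (G a) (Chat k Y s e) \<omega> - real_cond_exp M (G (a - 1)) (Chat k Y s e) \<omega>
        = real_cond_exp M (G a) (H a) \<omega> - real_cond_exp M (G (a - 1)) (real_cond_exp M (G a) (H a)) \<omega>"
      if "a \<in> {1..n}" for a
      using subalgebra_past sets_coord_algebra_mono[OF past_mono[of "a - 1" a]] integrable
        real_cond_exp_leave_out_cost[OF that]
      by (intro real_cond_exp_increment) (auto simp: G_def H_def)
  qed simp
  also have "\<dots> \<le> exp (l\<^sup>2 * (18 * Mk\<^sup>2 * real n * (2 * real m + 1)) / 8)"
  proof -
    have "(\<Sum>a=1..n. (w a * Mk - - 2 * w a * Mk)\<^sup>2) = 9 * Mk\<^sup>2 * (\<Sum>a=1..n. (w a)\<^sup>2)"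
      by (simp add: sum_distrib_left power_mult_distrib algebra_simps)
    also have "\<dots> \<le> 9 * Mk\<^sup>2 * (2 * real n * (2 * real m + 1))"
      using sum_window_length_sq_le[where m = m and n = n] by (intro mult_left_mono) (simp_all add: w_def)
    finally have "(\<Sum>a=1..n. (w a * Mk - - 2 * w a * Mk)\<^sup>2) \<le> 18 * Mk\<^sup>2 * real n * (2 * real m + 1)"
      by (simp only: mult_ac)
    then show ?thesis
      by (simp only: exp_le_cancel_iff) (intro divide_right_mono mult_left_mono; simp)
  qed
  finally show ?thesis .
qed

lemma Chat_deviation_tail:
  assumes "0 < Mk" "0 < x"
  shows "prob {\<omega> \<in> space M. x \<le> \<bar>Chat k Y s e \<omega> - expectation (Chat k Y s e)\<bar>}
           \<le> 2 * exp (- x\<^sup>2 / (9 * Mk\<^sup>2 * real n * (2 * real m + 1)))"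
proof -
  have "integrable M (Chat k Y s e)"
    using abs_Chat_le by (intro integrable_AE_bounded AE_I2) auto
  then have "\<bar>expectation (Chat k Y s e)\<bar> \<le> real n * Mk"
    using abs_Chat_le by (intro integral_abs_bound[THEN order.trans] integral_le_const) auto
  then have deviation_bound: "\<bar>Chat k Y s e \<omega> - expectation (Chat k Y s e)\<bar> \<le> 2 * (real n * Mk)" for \<omega>
    using abs_Chat_le[of \<omega>] by linarith
  have "integrable M (\<lambda>\<omega>. exp (l * (Chat k Y s e \<omega> - expectation (Chat k Y s e))))" for l
    using exp_mult_le_of_abs_le[OF deviation_bound] by (intro integrable_AE_bounded AE_I2) auto
  moreover have "0 < 18 * Mk\<^sup>2 * real n * (2 * real m + 1)"
    using assms by simp
  ultimately have "prob {\<omega> \<in> space M. x \<le> \<bar>Chat k Y s e \<omega> - expectation (Chat k Y s e)\<bar>}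
      \<le> 2 * exp (- 2 * x\<^sup>2 / (18 * Mk\<^sup>2 * real n * (2 * real m + 1)))"
    by (intro prob_abs_deviation_ge_le_of_mgf Chat_mgf \<open>0 < x\<close>) auto
  also have "- 2 * x\<^sup>2 / (18 * Mk\<^sup>2 * real n * (2 * real m + 1)) = - x\<^sup>2 / (9 * Mk\<^sup>2 * real n * (2 * real m + 1))"
    by simp
  finally show ?thesis .
qed

lemma Chat_concentration:
  assumes "0 < x"
  shows "prob {\<omega> \<in> space M. x < \<bar>Chat k Y s e \<omega> - expectation (Chat k Y s e)\<bar>}
           \<le> 4 * exp (- (x\<^sup>2 / (8 * (8 * real m + 5) * Mk\<^sup>2 * real n)))"
proof (cases "Mk = 0")
  case True
  \<comment> \<open>the right-hand side is then \<open>4\<close>, because \<open>x\<^sup>2 / 0 = 0\<close>\<close>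
  then show ?thesis
    using order.trans[OF prob_le_1, where c = 4] by simp
next
  case False
  with k_bounds[of undefined undefined] have "0 < Mk"
    by linarith
  have "prob {\<omega> \<in> space M. x < \<bar>Chat k Y s e \<omega> - expectation (Chat k Y s e)\<bar>}
      \<le> prob {\<omega> \<in> space M. x \<le> \<bar>Chat k Y s e \<omega> - expectation (Chat k Y s e)\<bar>}"
    by (intro finite_measure_mono) auto
  also have "\<dots> \<le> 2 * exp (- x\<^sup>2 / (9 * Mk\<^sup>2 * real n * (2 * real m + 1)))"
    by (rule Chat_deviation_tail[OF \<open>0 < Mk\<close> \<open>0 < x\<close>])
  also have "\<dots> \<le> 4 * exp (- (x\<^sup>2 / (8 * (8 * real m + 5) * Mk\<^sup>2 * real n)))"
  proof -
    have "9 * (2 * real m + 1) * (Mk\<^sup>2 * real n) \<le> 8 * (8 * real m + 5) * (Mk\<^sup>2 * real n)"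
      by (intro mult_right_mono) auto
    then have "x\<^sup>2 / (8 * (8 * real m + 5) * Mk\<^sup>2 * real n) \<le> x\<^sup>2 / (9 * Mk\<^sup>2 * real n * (2 * real m + 1))"
      using \<open>0 < Mk\<close> by (intro divide_left_mono mult_pos_pos) (simp_all add: algebra_simps)
    then have "exp (- x\<^sup>2 / (9 * Mk\<^sup>2 * real n * (2 * real m + 1)))
        \<le> exp (- (x\<^sup>2 / (8 * (8 * real m + 5) * Mk\<^sup>2 * real n)))"
      by simp
    then show ?thesis
      using exp_gt_zero[of "- (x\<^sup>2 / (8 * (8 * real m + 5) * Mk\<^sup>2 * real n))"] by linarith
  qed
  finally show ?thesis .
qed

end

theorem mainTheorem1:
  fixes P :: "'w measure"
    and Y :: "nat \<Rightarrow> 'w \<Rightarrow> real ^ 'd"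
    and T K m :: nat
    and \<tau> :: "nat \<Rightarrow> nat"
    and k :: "real ^ 'd \<Rightarrow> real ^ 'd \<Rightarrow> real"
    and Mk :: real
    and s e :: nat
    and x :: real
  assumes prob: "prob_space P"
    and rv: "\<And>t. t \<in> {1..T} \<Longrightarrow> Y t \<in> borel_measurable P"
    and tau0: "\<tau> 0 = 0"
    and tauK: "\<tau> (K + 1) = T"
    and tau_mono: "\<And>i. i \<le> K \<Longrightarrow> \<tau> i < \<tau> (Suc i)"
    and mdep: "\<And>t. t \<le> T \<Longrightarrow>
        prob_space.indep_var P
          (PiM {1..t} (\<lambda>_. borel)) (\<lambda>\<omega>. \<lambda>i\<in>{1..t}. Y i \<omega>)
          (PiM {t+m+1..T} (\<lambda>_. borel)) (\<lambda>\<omega>. \<lambda>i\<in>{t+m+1..T}. Y i \<omega>)"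
    and stat: "\<And>j a b l. j \<in> {1..K+1} \<Longrightarrow>
        \<tau> (j - 1) < a \<Longrightarrow> a + l \<le> \<tau> j \<Longrightarrow> \<tau> (j - 1) < b \<Longrightarrow> b + l \<le> \<tau> j \<Longrightarrow>
        distr P (PiM {0..l} (\<lambda>_. borel)) (\<lambda>\<omega>. \<lambda>i\<in>{0..l}. Y (a + i) \<omega>)
          = distr P (PiM {0..l} (\<lambda>_. borel)) (\<lambda>\<omega>. \<lambda>i\<in>{0..l}. Y (b + i) \<omega>)"
    and k_meas: "case_prod k \<in> borel_measurable (borel \<Otimes>\<^sub>M borel)"
    and k_pd: "pos_def_kernel k"
    and k_char: "characteristic_kernel k"
    and k_bnd: "\<And>u v. 0 \<le> k u v \<and> k u v \<le> Mk"
    and se: "1 \<le> s" "s \<le> e" "e \<le> T"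
    and xpos: "x > 0"
  shows "measure P {\<omega> \<in> space P.
            \<bar>Chat k Y s e \<omega> - prob_space.expectation P (Chat k Y s e)\<bar> > x}
         \<le> 4 * exp (- (x\<^sup>2 / (8 * (8 * real m + 5) * Mk\<^sup>2 * real (e - s + 1))))"
proof -
  interpret m_dependent_kernel_cost P Y T m s e k Mk
    using rv mdep k_meas k_bnd se
    by (intro m_dependent_kernel_cost.intro m_dependent_kernel_cost_axioms.intro prob)
       (simp_all add: coords_def[abs_def])
  show ?thesis
    using Chat_concentration[OF xpos] by simp
qed

end
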